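(* Let $g$ be a partial function from $X^M$ to a set $Y$. Then there are a hereditarily thrifty partial function $g'\subseteq g$ and a partial function $h$ from $X^M$ to $X^M$ in $\mathscr C_I$ such that $g=g'\circ h$. In particular, if $Y=X$ and $g\in\mathscr C_J$, then $g'\in\mathscr C_J$, so every (partial) $\mathscr C_J$-function is the composition of a hereditarily thrifty $\mathscr C_J$-function with a $\mathscr C_I$-function.
   Context: $X=\omega\times\omega$, elements $(a|b)$ ($x$-coordinate $a$, $y$-coordinate $b$); $M=\{1,\dots,m\}$. Width of $Y\subseteq X$: $\sup_n|Y\cap(\omega\times\{n\})|$; $I$ = ideal of subsets of $X$ of finite width; $J$ = ideal of subsets of $X$ meeting each line $\omega\times\{n\}$ in a finite set. For an ideal $K$, $\mathscr C_K$ is the set of finitary operations $f:X^n\to X$ with $f[A^n]\in K$ for all $A\in K$; a partial function from $X^M$ to $X$ is in $\mathscr C_K$ iff it has a total extension in $\mathscr C_K$, and a partial function from $X^M$ to $X^M$ is in $\mathscr C_K$ iff each component is. For a finite index set $N$, $B^N_k=\{u\in X^N:\exists i\in N\,((u_i)^y<k)\}$; bounded = contained in some $B^N_k$; a partial $p$ from $X^N$ to $Y$ is thrifty iff $p^{-1}[d]$ is bounded for all $d\in Y$. For $S\subseteq M$, $T=M\setminus S$, $c\in X^S$: $p_{\cup c}(z)=p(z\cup c)$ for $z\in X^T$. A partial $p$ from $X^M$ to $Y$ is hereditarily thrifty iff $p_{\cup c}$ is thrifty for every proper subset $S\subsetneq M$ and every $c\in X^S$. Composition of partial functions: $(g'\circ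 h)(u)$ defined iff $h(u)$ defined and in $\operatorname{dom}(g')$. *)

theory Defs
  imports Main "HOL-Library.FuncSet"
begin

type_synonym pt = "nat \<times> nat"   (* (a|b) = (a,b); x-coordinate fst, y-coordinate snd *)
type_synonym tup = "nat \<Rightarrow> pt"  (* elements of X^N, extensional: undefined outside N *)

definition Mset :: "nat \<Rightarrow> nat set" where "Mset m = {1..m}"

definition XN :: "nat set \<Rightarrow> tup set" where "XN N = PiE N (\<lambda>_. UNIV)"

definition hline :: "nat \<Rightarrow> pt set" where "hline n = {p. snd p = n}"

definition I_ideal :: "pt set set" where
  "I_ideal = {A. \<exists>k::nat. \<forall>n. finite (A \<inter> hline n) \<and> card (A \<inter> hline n) \<le> k}"

definition J_ideal :: "pt set set" where
  "J_ideal = {A. \<forall>n. finite (A \<inter> hline n)}"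

definition op_in_C :: "pt set set \<Rightarrow> nat set \<Rightarrow> (tup \<Rightarrow> pt) \<Rightarrow> bool" where
  "op_in_C K N F \<longleftrightarrow> (\<forall>A\<in>K. F ` (PiE N (\<lambda>_. A)) \<in> K)"

definition pfun_in_C :: "pt set set \<Rightarrow> nat set \<Rightarrow> (tup \<Rightarrow> pt option) \<Rightarrow> bool" where
  "pfun_in_C K N p \<longleftrightarrow> (\<exists>F. op_in_C K N F \<and> (\<forall>u\<in>XN N. \<forall>y. p u = Some y \<longrightarrow> F u = y))"

definition pvec_in_C :: "pt set set \<Rightarrow> nat set \<Rightarrow> (tup \<Rightarrow> tup option) \<Rightarrow> bool" where
  "pvec_in_C K N h \<longleftrightarrow> (\<forall>i\<in>N. pfun_in_C K N (\<lambda>u. map_option (\<lambda>v. v i) (h u)))"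

definition Bk :: "nat set \<Rightarrow> nat \<Rightarrow> tup set" where
  "Bk N k = {u \<in> XN N. \<exists>i\<in>N. snd (u i) < k}"

definition bounded_set :: "nat set \<Rightarrow> tup set \<Rightarrow> bool" where
  "bounded_set N A \<longleftrightarrow> (\<exists>k. A \<subseteq> Bk N k)"

definition thrifty :: "nat set \<Rightarrow> (tup \<Rightarrow> 'y option) \<Rightarrow> bool" where
  "thrifty N p \<longleftrightarrow> (\<forall>d. bounded_set N {u. p u = Some d})"

definition p_cup :: "nat set \<Rightarrow> (tup \<Rightarrow> 'y option) \<Rightarrow> nat set \<Rightarrow> tup \<Rightarrow> tup \<Rightarrow> 'y option" where
  "p_cup M p S c = (\<lambda>z. if z \<in> XN (M - S) then p (\<lambda>i. if i \<in> S then c i else z i) else None)"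

definition hered_thrifty :: "nat set \<Rightarrow> (tup \<Rightarrow> 'y option) \<Rightarrow> bool" where
  "hered_thrifty M p \<longleftrightarrow>
     (\<forall>S c. S \<subset> M \<longrightarrow> c \<in> XN S \<longrightarrow> thrifty (M - S) (p_cup M p S c))"

end

theory Submission
  imports Defs "HOL-Library.Countable_Set" "HOL-Analysis.Finite_Cartesian_Product"
begin

(* Fix a set R of finite width and call the coordinates of a tuple v that lie outside R
   its fresh coordinates.  Replace every u in dom g by a representative rep u with the
   same g-value, no fresh coordinates beyond those of u, an inclusion-minimal set of fresh coordinates
   within its g-fibre, and chosen canonically from that set.  Then h = rep only ever
   introduces points of R, so h is in C_I, and g' = g restricted to the representatives
   satisfies g = g' o h.
   R is built by a diagonal construction (countably many demands, satisfied in disjoint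
   horizontal bands) so that every slice of a g-fibre which is unbounded in the free
   coordinates contains a tuple whose free coordinates lie in R.  For such a slice all
   representatives have the same fresh coordinates, hence coincide, so every slice of
   g' is either bounded or a singleton: g' is hereditarily thrifty.
   Restricting g preserves membership in C_J, which gives the second claim. *)

section \<open>Sets of finite width\<close>

lemma I_ideal_subset_Un:
  assumes "A \<in> I_ideal" "R \<in> I_ideal" "B \<subseteq> A \<union> R"
  shows "B \<in> I_ideal"
proof -
  obtain ka where ka: "\<And>n. finite (A \<inter> hline n) \<and> card (A \<inter> hline n) \<le> ka"
    using assms(1) unfolding I_ideal_def by blast
  obtain kr where kr: "\<And>n. finite (R \<inter> hline n) \<and> card (R \<inter> hline n) \<le> kr"
    using assms(2) unfolding I_ideal_def by blast
  have "finite (B \<inter> hline n) \<and> card (B \<inter> hline n) \<le> ka + kr" for n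
  proof -
    have sub: "B \<inter> hline n \<subseteq> (A \<inter> hline n) \<union> (R \<inter> hline n)" using assms(3) by blast
    have fin: "finite ((A \<inter> hline n) \<union> (R \<inter> hline n))" using ka kr by blast
    have "card (B \<inter> hline n) \<le> card ((A \<inter> hline n) \<union> (R \<inter> hline n))"
      by (rule card_mono[OF fin sub])
    also have "\<dots> \<le> card (A \<inter> hline n) + card (R \<inter> hline n)" by (rule card_Un_le)
    also have "\<dots> \<le> ka + kr" using ka kr by (meson add_mono)
    finally show ?thesis using finite_subset[OF sub fin] by simp
  qed
  then show ?thesis unfolding I_ideal_def by blast
qed

lemma I_ideal_banded_Union:
  assumes fin: "\<And>j. finite (P j)" and card: "\<And>j. card (P j) \<le> m"
    and bands: "\<And>j j' p p'. p \<in> P j \<Longrightarrow> p' \<in> P j' \<Longrightarrow> snd p = snd p' \<Longrightarrow> j = j'"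
  shows "(\<Union>j. P j) \<in> I_ideal"
proof -
  have "finite ((\<Union>j. P j) \<inter> hline n) \<and> card ((\<Union>j. P j) \<inter> hline n) \<le> m" for n
  proof (cases "(\<Union>j. P j) \<inter> hline n = {}")
    case False
    then obtain p j where "p \<in> P j" "snd p = n" unfolding hline_def by blast
    then have sub: "(\<Union>j. P j) \<inter> hline n \<subseteq> P j" using bands unfolding hline_def by blast
    show ?thesis
      using card_mono[OF fin sub] finite_subset[OF sub fin] card[of j] by simp
  qed simp
  then show ?thesis unfolding I_ideal_def by blast
qed

text \<open>The q-th demand is met above all coordinates used for the previous ones.\<close>

lemma I_ideal_high_witnesses:
  fixes P :: "'q \<Rightarrow> tup \<Rightarrow> bool" and T :: "'q \<Rightarrow> nat set"
  assumes countable: "countable Q"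
    and finite: "\<And>q. q \<in> Q \<Longrightarrow> finite (T q)" and card: "\<And>q. q \<in> Q \<Longrightarrow> card (T q) \<le> m"
    and high: "\<And>q N. q \<in> Q \<Longrightarrow> \<exists>v. P q v \<and> (\<forall>i\<in>T q. N \<le> snd (v i))"
  shows "\<exists>R\<in>I_ideal. \<forall>q\<in>Q. \<exists>v. P q v \<and> v ` T q \<subseteq> R"
proof (cases "Q = {}")
  case True
  moreover have "{} \<in> I_ideal" by (simp add: I_ideal_def)
  ultimately show ?thesis by blast
next
  case False
  define q where "q = from_nat_into Q"
  have q_in: "q j \<in> Q" for j using from_nat_into[OF False] by (simp add: q_def)
  define wit where "wit N j = (SOME v. P (q j) v \<and> (\<forall>i\<in>T (q j). N \<le> snd (v i)))" for N j
  have wit: "P (q j) (wit N j) \<and> (\<forall>i\<in>T (q j). N \<le> snd (wit N j i))" for N j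
    unfolding wit_def by (rule someI_ex[OF high[OF q_in]])
  define bnd where "bnd = rec_nat 0 (\<lambda>j b. Suc (b + (\<Sum>i\<in>T (q j). snd (wit b j i))))"
  have bnd_Suc: "bnd (Suc j) = Suc (bnd j + (\<Sum>i\<in>T (q j). snd (wit (bnd j) j i)))" for j
    by (simp add: bnd_def)
  define band where "band j = wit (bnd j) j ` T (q j)" for j
  have in_band: "bnd j \<le> snd p \<and> snd p < bnd (Suc j)" if p_in: "p \<in> band j" for p j
  proof -
    obtain i where i: "i \<in> T (q j)" and p: "p = wit (bnd j) j i"
      using p_in unfolding band_def by blast
    have "snd p \<le> (\<Sum>i\<in>T (q j). snd (wit (bnd j) j i))"
      unfolding p by (rule member_le_sum) (use finite[OF q_in] i in auto)
    then show ?thesis using wit[of j "bnd j"] i p bnd_Suc[of j] by auto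
  qed
  have bnd_mono: "bnd (Suc j) \<le> bnd j'" if "j < j'" for j j'
  proof (rule lift_Suc_mono_le[of bnd])
    show "bnd n \<le> bnd (Suc n)" for n by (simp add: bnd_Suc)
  qed (use that in simp)
  have "(\<Union>j. band j) \<in> I_ideal"
  proof (rule I_ideal_banded_Union)
    show "finite (band j)" for j unfolding band_def using finite[OF q_in] by blast
    show "card (band j) \<le> m" for j
      unfolding band_def using card_image_le[OF finite[OF q_in]] card[OF q_in] by (rule le_trans)
    show "j = j'" if "p \<in> band j" "p' \<in> band j'" "snd p = snd p'" for j j' p p'
    proof (rule ccontr)
      assume "j \<noteq> j'"
      then consider "j < j'" | "j' < j" by linarith
      then show False
        using in_band[OF that(1)] in_band[OF that(2)] that(3) bnd_mono[of j j'] bnd_mono[of j' j]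
        by cases linarith+
    qed
  qed
  moreover have "\<exists>v. P q' v \<and> v ` T q' \<subseteq> (\<Union>j. band j)" if q': "q' \<in> Q" for q'
  proof -
    obtain j where "q j = q'" using from_nat_into_surj[OF countable q'] q_def by blast
    then show ?thesis using wit[of j "bnd j"] unfolding band_def by blast
  qed
  ultimately show ?thesis by blast
qed


lemma pfun_in_C_map_le:
  assumes "pfun_in_C K N g" "g' \<subseteq>\<^sub>m g"
  shows "pfun_in_C K N g'"
proof -
  obtain F where "op_in_C K N F" "\<forall>u\<in>XN N. \<forall>y. g u = Some y \<longrightarrow> F u = y"
    using assms(1) unfolding pfun_in_C_def by blast
  moreover have "g' u = Some y \<Longrightarrow> g u = Some y" for u y
    using assms(2) unfolding map_le_def by (metis domI)
  ultimately show ?thesis unfolding pfun_in_C_def by blast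
qed

text \<open>A partial map on X^N whose values only use the coordinates of its argument and
  points of a fixed set R of finite width is in C_I: outside its domain extend each
  component by the corresponding projection.\<close>

lemma pvec_in_C_I_if_values_in_R:
  assumes R: "R \<in> I_ideal" and vals: "\<And>u v. h u = Some v \<Longrightarrow> v ` N \<subseteq> u ` N \<union> R"
  shows "pvec_in_C I_ideal N h"
  unfolding pvec_in_C_def pfun_in_C_def
proof (intro ballI)
  fix i assume i: "i \<in> N"
  define F where "F u = (case h u of Some v \<Rightarrow> v i | None \<Rightarrow> u i)" for u
  have "op_in_C I_ideal N F" unfolding op_in_C_def
  proof
    fix A assume A: "A \<in> I_ideal"
    have "F ` PiE N (\<lambda>_. A) \<subseteq> A \<union> R"
    proof
      fix p assume "p \<in> F ` PiE N (\<lambda>_. A)"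
      then obtain u where u: "u \<in> PiE N (\<lambda>_. A)" and p: "p = F u" by blast
      have "u ` N \<subseteq> A" using u by auto
      then show "p \<in> A \<union> R"
        using vals[of u] i unfolding p F_def by (cases "h u") auto
    qed
    then show "F ` PiE N (\<lambda>_. A) \<in> I_ideal" using I_ideal_subset_Un A R by blast
  qed
  moreover have "\<forall>u\<in>XN N. \<forall>y. map_option (\<lambda>v. v i) (h u) = Some y \<longrightarrow> F u = y"
    unfolding F_def by auto
  ultimately show "\<exists>F. op_in_C I_ideal N F \<and>
      (\<forall>u\<in>XN N. \<forall>y. map_option (\<lambda>v. v i) (h u) = Some y \<longrightarrow> F u = y)"
    by blast
qed

definition glue :: "nat set \<Rightarrow> tup \<Rightarrow> tup \<Rightarrow> tup" where
  "glue S c z = (\<lambda>i. if i \<in> S then c i else z i)"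

lemma p_cup_glue: "p_cup M p S c z = (if z \<in> XN (M - S) then p (glue S c z) else None)"
  by (simp add: p_cup_def glue_def)

lemma glue_inj_on: "inj_on (glue S c) (XN (M - S))"
proof (rule inj_onI)
  fix z z' assume z: "z \<in> XN (M - S)" and z': "z' \<in> XN (M - S)" and eq: "glue S c z = glue S c z'"
  show "z = z'"
  proof (rule PiE_ext[OF z[unfolded XN_def] z'[unfolded XN_def]])
    show "z i = z' i" if "i \<in> M - S" for i
      using fun_cong[OF eq, of i] that unfolding glue_def by auto
  qed
qed

lemma bounded_set_subset_singleton:
  assumes "i0 \<in> N" "z0 \<in> XN N" "Z \<subseteq> {z0}"
  shows "bounded_set N Z"
proof -
  have "Z \<subseteq> Bk N (Suc (snd (z0 i0)))" using assms unfolding Bk_def by auto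
  then show ?thesis unfolding bounded_set_def by blast
qed

section \<open>Canonical representatives with few fresh coordinates\<close>

definition fresh_coords :: "nat set \<Rightarrow> pt set \<Rightarrow> tup \<Rightarrow> pt set" where
  "fresh_coords M R v = v ` M - R"

lemma fresh_coords_mono:
  assumes "S \<subseteq> M" "w ` (M - S) \<subseteq> R" "\<And>i. i \<in> S \<Longrightarrow> w i = v i"
  shows "fresh_coords M R w \<subseteq> fresh_coords M R v"
proof
  fix p assume "p \<in> fresh_coords M R w"
  then obtain i where i: "i \<in> M" "p = w i" "p \<notin> R" unfolding fresh_coords_def by blast
  then have "i \<in> S" using assms(2) by blast
  then show "p \<in> fresh_coords M R v" using i assms(1,3) unfolding fresh_coords_def by auto
qed

text \<open>Below any element with finite f-value there is an element whose f-value is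
  minimal with respect to strict inclusion (take one of least cardinality).\<close>

lemma exists_inclusion_minimal:
  assumes "P u" "finite (f u)"
  shows "\<exists>v. P v \<and> f v \<subseteq> f u \<and> (\<forall>w. P w \<longrightarrow> \<not> f w \<subset> f v)"
proof -
  obtain v where v: "P v \<and> f v \<subseteq> f u"
    and least: "\<And>w. P w \<and> f w \<subseteq> f u \<Longrightarrow> card (f v) \<le> card (f w)"
    using ex_has_least_nat[of "\<lambda>v. P v \<and> f v \<subseteq> f u" u "\<lambda>v. card (f v)"] assms(1) by blast
  have "\<not> f w \<subset> f v" if "P w" for w
  proof
    assume sub: "f w \<subset> f v"
    have "finite (f v)" using v assms(2) finite_subset by blast
    then have "card (f w) < card (f v)" using sub by (rule psubset_card_mono)
    then show False using least[of w] that sub v by auto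
  qed
  then show ?thesis using v by blast
qed

lemma canonical_representatives:
  fixes g :: "tup \<Rightarrow> 'y option"
  assumes "finite M"
  obtains rep where
    "\<And>u. u \<in> dom g \<Longrightarrow> rep u \<in> dom g \<and> g (rep u) = g u"
    "\<And>u. u \<in> dom g \<Longrightarrow> fresh_coords M R (rep u) \<subseteq> fresh_coords M R u"
    "\<And>u v. u \<in> dom g \<Longrightarrow> v \<in> dom g \<Longrightarrow> g v = g u \<Longrightarrow>
       \<not> fresh_coords M R v \<subset> fresh_coords M R (rep u)"
    "\<And>u u'. u \<in> dom g \<Longrightarrow> u' \<in> dom g \<Longrightarrow> g u' = g u \<Longrightarrow>
       fresh_coords M R (rep u') = fresh_coords M R (rep u) \<Longrightarrow> rep u' = rep u"
proof -
  let ?fresh = "fresh_coords M R"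
  define pick where "pick d K = (SOME v. v \<in> dom g \<and> g v = d \<and> ?fresh v = K)" for d K
  define minimal where "minimal u v \<longleftrightarrow> v \<in> dom g \<and> g v = g u \<and> ?fresh v \<subseteq> ?fresh u \<and>
      (\<forall>w. w \<in> dom g \<and> g w = g u \<longrightarrow> \<not> ?fresh w \<subset> ?fresh v)" for u v
  define K where "K u = ?fresh (SOME v. minimal u v)" for u
  define rep where "rep u = pick (g u) (K u)" for u
  have rep: "minimal u (rep u) \<and> ?fresh (rep u) = K u" if u: "u \<in> dom g" for u
  proof -
    have "finite (?fresh u)" using assms unfolding fresh_coords_def by simp
    then have "\<exists>v. minimal u v"
      using exists_inclusion_minimal[of "\<lambda>v. v \<in> dom g \<and> g v = g u" u ?fresh] u
      unfolding minimal_def by blast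
    then have min: "minimal u (SOME v. minimal u v)" by (rule someI_ex)
    then have "\<exists>v. v \<in> dom g \<and> g v = g u \<and> ?fresh v = K u"
      unfolding minimal_def K_def by blast
    from someI_ex[OF this] have "rep u \<in> dom g \<and> g (rep u) = g u \<and> ?fresh (rep u) = K u"
      unfolding rep_def pick_def .
    with min show ?thesis unfolding minimal_def K_def by simp
  qed
  have canonical: "rep u = pick (g u) (?fresh (rep u))" if "u \<in> dom g" for u
    using rep[OF that] unfolding rep_def by simp
  show ?thesis
  proof (rule that)
    show "rep u' = rep u" if "u \<in> dom g" "u' \<in> dom g" "g u' = g u"
      "?fresh (rep u') = ?fresh (rep u)" for u u'
      using canonical[OF that(1)] canonical[OF that(2)] that(3,4) by simp
  next
    show "rep u \<in> dom g \<and> g (rep u) = g u" if "u \<in> dom g" for u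
      using rep[OF that] unfolding minimal_def by simp
    show "?fresh (rep u) \<subseteq> ?fresh u" if "u \<in> dom g" for u
      using rep[OF that] unfolding minimal_def by blast
    show "\<not> ?fresh v \<subset> ?fresh (rep u)" if "u \<in> dom g" "v \<in> dom g" "g v = g u" for u v
      using rep[OF that(1)] that(2,3) unfolding minimal_def by blast
  qed
qed

section \<open>A set of finite width witnessing all unbounded slices\<close>

definition slice :: "(tup \<Rightarrow> 'y option) \<Rightarrow> nat set \<Rightarrow> tup \<Rightarrow> tup \<Rightarrow> tup set" where
  "slice g S c u0 = {v \<in> dom g. g v = g u0 \<and> (\<forall>i\<in>S. v i = c i)}"

definition unbounded_slice :: "(tup \<Rightarrow> 'y option) \<Rightarrow> nat set \<Rightarrow> nat set \<Rightarrow> tup \<Rightarrow> tup \<Rightarrow> bool" where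
  "unbounded_slice g M S c u0 \<longleftrightarrow> (\<forall>k. \<exists>v\<in>slice g S c u0. \<forall>i\<in>M - S. k \<le> snd (v i))"

text \<open>There are only countably many slices, so the diagonal construction yields one
  set R of finite width such that every unbounded slice has a member whose free
  coordinates all lie in R.\<close>

lemma witness_set_exists:
  fixes g :: "tup \<Rightarrow> 'y option"
  assumes finite_M: "finite M" and dom_g: "dom g \<subseteq> XN M"
  shows "\<exists>R\<in>I_ideal. \<forall>S c u0. S \<subseteq> M \<longrightarrow> c \<in> XN S \<longrightarrow> u0 \<in> dom g \<longrightarrow>
           unbounded_slice g M S c u0 \<longrightarrow> (\<exists>w\<in>slice g S c u0. w ` (M - S) \<subseteq> R)"
proof -
  define Q where "Q = {(S, c, u0). S \<subseteq> M \<and> c \<in> XN S \<and> u0 \<in> dom g \<and> unbounded_slice g M S c u0}"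
  have "countable Q"
  proof (rule countable_subset)
    show "Q \<subseteq> (SIGMA S:Pow M. XN S \<times> XN M)" unfolding Q_def using dom_g by auto
    have XN: "countable (XN S)" if "S \<subseteq> M" for S
      unfolding XN_def using finite_subset[OF that finite_M]
      by (rule countable_PiE) (auto intro: countableI_type)
    show "countable (SIGMA S:Pow M. XN S \<times> XN M)"
    proof (rule countable_SIGMA)
      show "countable (Pow M)" using finite_M by (simp add: countable_finite)
      show "countable (XN S \<times> XN M)" if "S \<in> Pow M" for S
        using XN that by (intro countable_SIGMA) auto
    qed
  qed
  then have "\<exists>R\<in>I_ideal. \<forall>q\<in>Q. \<exists>v. v \<in> slice g (fst q) (fst (snd q)) (snd (snd q)) \<and>
      v ` (M - fst q) \<subseteq> R"
  proof (rule I_ideal_high_witnesses[where m = "card M" and T = "\<lambda>q. M - fst q"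
        and P = "\<lambda>q v. v \<in> slice g (fst q) (fst (snd q)) (snd (snd q))"])
    show "finite (M - fst q)" "card (M - fst q) \<le> card M" for q
      using finite_M by (auto intro: card_mono)
    show "\<exists>v. v \<in> slice g (fst q) (fst (snd q)) (snd (snd q)) \<and> (\<forall>i\<in>M - fst q. N \<le> snd (v i))"
      if "q \<in> Q" for q N
    proof -
      have "unbounded_slice g M (fst q) (fst (snd q)) (snd (snd q))"
        using that unfolding Q_def by auto
      then show ?thesis unfolding unbounded_slice_def by blast
    qed
  qed
  then obtain R where "R \<in> I_ideal" and R:
      "\<forall>q\<in>Q. \<exists>v. v \<in> slice g (fst q) (fst (snd q)) (snd (snd q)) \<and> v ` (M - fst q) \<subseteq> R"
    by blast
  moreover have "\<exists>w\<in>slice g S c u0. w ` (M - S) \<subseteq> R"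
    if "S \<subseteq> M" "c \<in> XN S" "u0 \<in> dom g" "unbounded_slice g M S c u0" for S c u0
  proof -
    have "(S, c, u0) \<in> Q" using that unfolding Q_def by blast
    from R[rule_format, OF this] show ?thesis by auto
  qed
  ultimately show ?thesis by blast
qed

section \<open>The reduction to canonical representatives\<close>

locale thrifty_reduction =
  fixes M :: "nat set" and g :: "tup \<Rightarrow> 'y option" and R :: "pt set" and rep :: "tup \<Rightarrow> tup"
  assumes dom_g: "dom g \<subseteq> XN M"
    and R_small: "R \<in> I_ideal"
    and R_witnesses: "\<And>S c u0. S \<subseteq> M \<Longrightarrow> c \<in> XN S \<Longrightarrow> u0 \<in> dom g \<Longrightarrow>
          unbounded_slice g M S c u0 \<Longrightarrow> \<exists>w\<in>slice g S c u0. w ` (M - S) \<subseteq> R"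
    and rep_in_fibre: "\<And>u. u \<in> dom g \<Longrightarrow> rep u \<in> dom g \<and> g (rep u) = g u"
    and rep_fresh: "\<And>u. u \<in> dom g \<Longrightarrow> fresh_coords M R (rep u) \<subseteq> fresh_coords M R u"
    and rep_minimal: "\<And>u v. u \<in> dom g \<Longrightarrow> v \<in> dom g \<Longrightarrow> g v = g u \<Longrightarrow>
          \<not> fresh_coords M R v \<subset> fresh_coords M R (rep u)"
    and rep_canonical: "\<And>u u'. u \<in> dom g \<Longrightarrow> u' \<in> dom g \<Longrightarrow> g u' = g u \<Longrightarrow>
          fresh_coords M R (rep u') = fresh_coords M R (rep u) \<Longrightarrow> rep u' = rep u"
begin

definition reduction :: "tup \<Rightarrow> tup option" where
  "reduction u = (if u \<in> dom g then Some (rep u) else None)"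

definition reduced :: "tup \<Rightarrow> 'y option" where
  "reduced = g |` (rep ` dom g)"

lemma reduced_le: "reduced \<subseteq>\<^sub>m g"
  unfolding reduced_def map_le_def by auto

lemma factorisation: "g = reduced \<circ>\<^sub>m reduction"
proof
  show "g u = (reduced \<circ>\<^sub>m reduction) u" for u
    using rep_in_fibre[of u] unfolding reduced_def reduction_def map_comp_def
    by (cases "u \<in> dom g") (auto simp: domIff)
qed

lemma reduction_dom: "dom reduction \<subseteq> XN M"
  using dom_g unfolding reduction_def dom_def by auto

lemma reduction_ran: "ran reduction \<subseteq> XN M"
  using dom_g rep_in_fibre unfolding reduction_def ran_def by (auto split: if_splits)

text \<open>A representative only uses coordinates of its argument and points of R.\<close>

lemma reduction_in_C_I: "pvec_in_C I_ideal M reduction"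
proof (rule pvec_in_C_I_if_values_in_R[OF R_small])
  show "v ` M \<subseteq> u ` M \<union> R" if "reduction u = Some v" for u v
    using that rep_fresh[of u] unfolding reduction_def fresh_coords_def by (auto split: if_splits)
qed

text \<open>In an unbounded slice all representatives coincide: the witness in R has no more
  fresh coordinates than any of them, so by minimality they all have exactly its fresh
  coordinates, and representatives are determined by these.\<close>

lemma representatives_collapse:
  assumes S: "S \<subseteq> M" "c \<in> XN S" "u0 \<in> dom g" "unbounded_slice g M S c u0"
    and u: "u \<in> dom g" "rep u \<in> slice g S c u0" and u': "u' \<in> dom g" "rep u' \<in> slice g S c u0"
  shows "rep u = rep u'"
proof -
  obtain w where w: "w \<in> slice g S c u0" "w ` (M - S) \<subseteq> R" using R_witnesses[OF S] by blast
  have fresh_eq: "fresh_coords M R (rep x) = fresh_coords M R w"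
    if "x \<in> dom g" "rep x \<in> slice g S c u0" for x
  proof -
    have "fresh_coords M R w \<subseteq> fresh_coords M R (rep x)"
      using w that(2) S(1) by (intro fresh_coords_mono) (auto simp: slice_def)
    moreover have "w \<in> dom g" "g w = g x"
      using w(1) that rep_in_fibre[OF that(1)] unfolding slice_def by auto
    ultimately show ?thesis using rep_minimal[OF that(1)] by blast
  qed
  have "g u' = g u" using u u' rep_in_fibre unfolding slice_def by auto
  then show ?thesis using rep_canonical[OF u(1) u'(1)] fresh_eq[OF u] fresh_eq[OF u'] by simp
qed

text \<open>Hence every slice of g' is bounded or has at most one element.\<close>

lemma reduced_hered_thrifty: "hered_thrifty M reduced"
  unfolding hered_thrifty_def thrifty_def
proof (intro allI impI)
  fix S c d assume S: "S \<subset> M" and c: "c \<in> XN S"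
  define Z where "Z = {z. p_cup M reduced S c z = Some d}"
  have Z_iff: "z \<in> Z \<longleftrightarrow> z \<in> XN (M - S) \<and> glue S c z \<in> rep ` dom g \<and> g (glue S c z) = Some d" for z
    unfolding Z_def p_cup_glue reduced_def by (auto simp: restrict_map_def)
  show "bounded_set (M - S) {z. p_cup M reduced S c z = Some d}"
    unfolding Z_def[symmetric]
  proof (cases "Z = {}")
    case True
    then show "bounded_set (M - S) Z" unfolding bounded_set_def by blast
  next
    case False
    then obtain z0 where z0: "z0 \<in> Z" by blast
    define u0 where "u0 = glue S c z0"
    have u0: "u0 \<in> dom g" using z0 Z_iff unfolding u0_def by blast
    have in_slice: "glue S c z \<in> slice g S c u0" if "z \<in> Z" for z
      using that z0 Z_iff unfolding slice_def u0_def by (auto simp: glue_def)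
    show "bounded_set (M - S) Z"
    proof (cases "unbounded_slice g M S c u0")
      case True
      have "Z \<subseteq> {z0}"
      proof
        fix z assume z: "z \<in> Z"
        obtain u u'' where "u \<in> dom g" "glue S c z = rep u" "u'' \<in> dom g" "glue S c z0 = rep u''"
          using z z0 Z_iff by blast
        then have "glue S c z = glue S c z0"
          using representatives_collapse[OF _ c u0 True] S in_slice[OF z] in_slice[OF z0] by auto
        then show "z \<in> {z0}" using inj_onD[OF glue_inj_on] z z0 Z_iff by blast
      qed
      moreover obtain i0 where "i0 \<in> M - S" using S by blast
      ultimately show ?thesis using z0 Z_iff bounded_set_subset_singleton by blast
    next
      case False
      then obtain k where k: "\<forall>v\<in>slice g S c u0. \<exists>i\<in>M - S. snd (v i) < k"
        unfolding unbounded_slice_def by (auto simp: not_le)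
      have "Z \<subseteq> Bk (M - S) k"
      proof
        fix z assume z: "z \<in> Z"
        obtain i where "i \<in> M - S" "snd (glue S c z i) < k" using k in_slice[OF z] by blast
        then show "z \<in> Bk (M - S) k" using z Z_iff unfolding Bk_def glue_def by auto
      qed
      then show ?thesis unfolding bounded_set_def by blast
    qed
  qed
qed

end

lemma thrifty_factorisation:
  fixes g :: "tup \<Rightarrow> 'y option"
  assumes "finite M" "dom g \<subseteq> XN M"
  shows "\<exists>g' h. g' \<subseteq>\<^sub>m g \<and> hered_thrifty M g' \<and> dom h \<subseteq> XN M \<and> ran h \<subseteq> XN M \<and>
           pvec_in_C I_ideal M h \<and> g = g' \<circ>\<^sub>m h"
proof -
  obtain R where R_small: "R \<in> I_ideal" and R_witnesses: "\<forall>S c u0. S \<subseteq> M \<longrightarrow> c \<in> XN S \<longrightarrow>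
      u0 \<in> dom g \<longrightarrow> unbounded_slice g M S c u0 \<longrightarrow> (\<exists>w\<in>slice g S c u0. w ` (M - S) \<subseteq> R)"
    using witness_set_exists[OF assms] by blast
  obtain rep where "\<And>u. u \<in> dom g \<Longrightarrow> rep u \<in> dom g \<and> g (rep u) = g u"
    "\<And>u. u \<in> dom g \<Longrightarrow> fresh_coords M R (rep u) \<subseteq> fresh_coords M R u"
    "\<And>u v. u \<in> dom g \<Longrightarrow> v \<in> dom g \<Longrightarrow> g v = g u \<Longrightarrow>
       \<not> fresh_coords M R v \<subset> fresh_coords M R (rep u)"
    "\<And>u u'. u \<in> dom g \<Longrightarrow> u' \<in> dom g \<Longrightarrow> g u' = g u \<Longrightarrow>
       fresh_coords M R (rep u') = fresh_coords M R (rep u) \<Longrightarrow> rep u' = rep u"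
    using canonical_representatives[OF assms(1), where g = g and R = R] by blast
  then interpret thrifty_reduction M g R rep
    using assms(2) R_small R_witnesses by unfold_locales simp_all
  show ?thesis
    using reduced_le reduced_hered_thrifty reduction_dom reduction_ran reduction_in_C_I factorisation
    by blast
qed

theorem mainTheorem8:
  shows
  "(\<forall>m (g :: tup \<Rightarrow> 'y option). dom g \<subseteq> XN (Mset m) \<longrightarrow>
      (\<exists>g' h. g' \<subseteq>\<^sub>m g \<and> hered_thrifty (Mset m) g' \<and>
             dom h \<subseteq> XN (Mset m) \<and> ran h \<subseteq> XN (Mset m) \<and>
             pvec_in_C I_ideal (Mset m) h \<and> g = g' \<circ>\<^sub>m h))
   \<and>
   (\<forall>m (g :: tup \<Rightarrow> pt option). dom g \<subseteq> XN (Mset m) \<longrightarrow> pfun_in_C J_ideal (Mset m) g \<longrightarrow>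
      (\<exists>g' h. g' \<subseteq>\<^sub>m g \<and> hered_thrifty (Mset m) g' \<and> pfun_in_C J_ideal (Mset m) g' \<and>
             dom h \<subseteq> XN (Mset m) \<and> ran h \<subseteq> XN (Mset m) \<and>
             pvec_in_C I_ideal (Mset m) h \<and> g = g' \<circ>\<^sub>m h))"
proof (intro conjI allI impI)
  have finite: "finite (Mset m)" for m by (simp add: Mset_def)
  show "\<exists>g' h. g' \<subseteq>\<^sub>m g \<and> hered_thrifty (Mset m) g' \<and> dom h \<subseteq> XN (Mset m) \<and>
      ran h \<subseteq> XN (Mset m) \<and> pvec_in_C I_ideal (Mset m) h \<and> g = g' \<circ>\<^sub>m h"
    if "dom g \<subseteq> XN (Mset m)" for m and g :: "tup \<Rightarrow> 'y option"
    using thrifty_factorisation[OF finite that] .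
  show "\<exists>g' h. g' \<subseteq>\<^sub>m g \<and> hered_thrifty (Mset m) g' \<and> pfun_in_C J_ideal (Mset m) g' \<and>
      dom h \<subseteq> XN (Mset m) \<and> ran h \<subseteq> XN (Mset m) \<and> pvec_in_C I_ideal (Mset m) h \<and> g = g' \<circ>\<^sub>m h"
    if "dom g \<subseteq> XN (Mset m)" "pfun_in_C J_ideal (Mset m) g" for m and g :: "tup \<Rightarrow> pt option"
    using thrifty_factorisation[OF finite that(1)] pfun_in_C_map_le[OF that(2)] by blast
qed

end
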